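(* Let $T$ be a correlation-free parity decision tree on $\{-1,1\}^n$ of depth $d$. Then $\mathbf{E}_{\ell\in T}\big(\sum_{i=1}^n \ell_i\big)^2\le d$.
   Context: A parity decision tree on $\{-1,1\}^n$ is a rooted full binary tree whose internal nodes are labelled by subsets $S\subseteq[n]$, whose two outgoing edges are labelled $-1$ and $1$; an input $x$ follows from a node labelled $S$ the edge labelled $\prod_{i\in S}x_i$. Depth is the maximum number of internal nodes on a root-to-leaf path. A quantity (such as $x_i$ or $x_i\oplus x_j$) is fixed by the queries on a path if it is determined by the answers to the parities queried along that path. $T$ is (pairwise) correlation-free if for every $i\ne j\in[n]$ and every path in $T$, whenever $x_i\oplus x_j$ is fixed by the queries in the path, so are $x_i$ and $x_j$. Each leaf is represented as a vector $\ell\in\{-1,0,1\}^n$ with $\ell_i$ the expected value of $x_i$ over uniformly random inputs reaching that leaf; $\mathbf{E}_{\ell\in T}$ is the expectation over the leaf reached by a uniformly random input. *)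

theory Defs
  imports Complex_Main
begin

text \<open>Inputs: points of the cube, coordinates indexed by 0..n-1 (standing for 1..n),
  values in {-1,1}; coordinates outside the index range are set to 1.\<close>
definition cube :: "nat \<Rightarrow> (nat \<Rightarrow> int) set" where
  "cube n = {x. (\<forall>i<n. x i \<in> {-1, 1}) \<and> (\<forall>i\<ge>n. x i = 1)}"

definition chi :: "nat set \<Rightarrow> (nat \<Rightarrow> int) \<Rightarrow> int" where
  "chi S x = (\<Prod>i\<in>S. x i)"

text \<open>Parity decision tree: Node S tm tp queries parity S, follows tm on answer -1
  and tp on answer 1.\<close>
datatype ptree = Leaf | Node "nat set" ptree ptree

fun depth :: "ptree \<Rightarrow> nat" where
  "depth Leaf = 0"
| "depth (Node S l r) = Suc (max (depth l) (depth r))"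

fun labels_in :: "nat \<Rightarrow> ptree \<Rightarrow> bool" where
  "labels_in n Leaf = True"
| "labels_in n (Node S l r) = (S \<subseteq> {0..<n} \<and> labels_in n l \<and> labels_in n r)"

fun qpaths :: "ptree \<Rightarrow> nat set list set" where
  "qpaths Leaf = {[]}"
| "qpaths (Node S l r) = insert [] ((Cons S) ` (qpaths l \<union> qpaths r))"

definition fixed_by :: "nat \<Rightarrow> nat set list \<Rightarrow> ((nat \<Rightarrow> int) \<Rightarrow> int) \<Rightarrow> bool" where
  "fixed_by n Q f = (\<forall>x\<in>cube n. \<forall>y\<in>cube n.
      (\<forall>S\<in>set Q. chi S x = chi S y) \<longrightarrow> f x = f y)"

text \<open>x_i xor x_j corresponds to the product x_i * x_j in the +-1 notation.\<close>
definition correlation_free :: "nat \<Rightarrow> ptree \<Rightarrow> bool" where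
  "correlation_free n T = (\<forall>Q\<in>qpaths T. \<forall>i<n. \<forall>j<n. i \<noteq> j \<longrightarrow>
      fixed_by n Q (\<lambda>x. x i * x j) \<longrightarrow>
      (fixed_by n Q (\<lambda>x. x i) \<and> fixed_by n Q (\<lambda>x. x j)))"

fun same_leaf :: "ptree \<Rightarrow> (nat \<Rightarrow> int) \<Rightarrow> (nat \<Rightarrow> int) \<Rightarrow> bool" where
  "same_leaf Leaf x y = True"
| "same_leaf (Node S l r) x y = (chi S x = chi S y \<and>
      (if chi S x = -1 then same_leaf l x y else same_leaf r x y))"

definition leaf_vec :: "nat \<Rightarrow> ptree \<Rightarrow> (nat \<Rightarrow> int) \<Rightarrow> nat \<Rightarrow> real" where
  "leaf_vec n T x i = (let L = {y\<in>cube n. same_leaf T x y} in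
      (\<Sum>y\<in>L. real_of_int (y i)) / real (card L))"

end

theory Submission
  imports Defs "HOL-Library.FuncSet" "HOL-Library.Function_Algebras"
begin

text \<open>Walk down the tree and track \<open>m\<close>, the mean of \<open>\<Sum>\<^sub>i x\<^sub>i\<close> over the inputs reaching
  the current node. The set of these inputs is a coset of the queries so far, and the mean of
  \<open>x\<^sub>i\<close> over it is \<open>x\<^sub>i\<close> itself if \<open>x\<^sub>i\<close> is fixed by the queries and \<open>0\<close> otherwise. One more
  query \<open>S\<close> can newly fix at most one coordinate: if it fixed \<open>x\<^sub>i\<close> and \<open>x\<^sub>j\<close> with \<open>i \<noteq> j\<close>, then
  both would flip together with \<open>\<chi>\<^sub>S\<close>, so \<open>x\<^sub>i x\<^sub>j\<close> was already fixed, and correlation-freeness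
  says \<open>x\<^sub>i\<close> and \<open>x\<^sub>j\<close> were fixed too. Hence the means of the two children differ by at most 2,
  so the second moment of \<open>m\<close> grows by at most 1 per level, starting from \<open>m = 0\<close> at the root.\<close>

lemma cube_coord: "x \<in> cube n \<Longrightarrow> x i \<in> {-1, 1}"
  by (cases "i < n") (auto simp: cube_def)

lemma cube_coord_square: "x \<in> cube n \<Longrightarrow> x i * x i = 1"
  using cube_coord[of x n i] by auto

lemma one_in_cube: "1 \<in> cube n"
  by (simp add: cube_def)

lemma times_in_cube: "u \<in> cube n \<Longrightarrow> v \<in> cube n \<Longrightarrow> u * v \<in> cube n"
proof -
  assume "u \<in> cube n" "v \<in> cube n"
  then have "u i * v i \<in> {-1, 1}" for i
    using cube_coord[of u n i] cube_coord[of v n i] by auto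
  with \<open>u \<in> cube n\<close> \<open>v \<in> cube n\<close> show ?thesis
    by (auto simp: cube_def)
qed

lemma cube_subset_image_PiE:
  "cube n \<subseteq> (\<lambda>f i. if i < n then f i else 1) ` (\<Pi>\<^sub>E i\<in>{..<n}. {-1, 1::int})"
proof
  fix x assume x: "x \<in> cube n"
  then have "x = (\<lambda>i. if i < n then restrict x {..<n} i else 1)"
    by (auto simp: cube_def)
  moreover have "restrict x {..<n} \<in> (\<Pi>\<^sub>E i\<in>{..<n}. {-1, 1})"
    using cube_coord[OF x] by auto
  ultimately show "x \<in> (\<lambda>f i. if i < n then f i else 1) ` (\<Pi>\<^sub>E i\<in>{..<n}. {-1, 1})"
    by blast
qed

lemma finite_cube: "finite (cube n)"
  by (rule finite_subset[OF cube_subset_image_PiE]) (simp add: finite_PiE)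

lemma card_cube_le: "card (cube n) \<le> 2 ^ n"
proof -
  have "card (cube n) \<le> card ((\<Pi>\<^sub>E i\<in>{..<n}. {-1, 1::int}))"
    by (rule order_trans[OF card_mono[OF _ cube_subset_image_PiE] card_image_le])
      (simp_all add: finite_PiE)
  also have "\<dots> = 2 ^ n"
    by (simp add: card_PiE flip: numeral_2_eq_2)
  finally show ?thesis .
qed

lemma chi_times: "chi S (u * v) = chi S u * chi S v"
  by (simp add: chi_def prod.distrib)

lemma chi_one: "chi S 1 = 1"
  by (simp add: chi_def)

lemma chi_square_cube: "x \<in> cube n \<Longrightarrow> chi S x * chi S x = 1"
  using cube_coord_square[of x n] by (simp add: chi_def flip: prod.distrib)

lemma chi_cube: "x \<in> cube n \<Longrightarrow> chi S x \<in> {-1, 1}"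
  using chi_square_cube[of x n S] zmult_eq_1_iff by auto

text \<open>The inputs reaching a node: a list of answered queries \<open>(S, b)\<close> along the path, so
  that both children of a cell are again cells, possibly empty.\<close>
definition cell :: "nat \<Rightarrow> (nat set \<times> int) list \<Rightarrow> (nat \<Rightarrow> int) set" where
  "cell n C = {y \<in> cube n. \<forall>(S, b) \<in> set C. chi S y = b}"

lemma cell_Nil: "cell n [] = cube n"
  by (simp add: cell_def)

lemma cell_snoc: "cell n (C @ [(S, b)]) = {y \<in> cell n C. chi S y = b}"
  by (auto simp: cell_def)

lemma cell_subset_cube: "cell n C \<subseteq> cube n"
  by (auto simp: cell_def)

lemma finite_cell: "finite (cell n C)"
  using finite_subset[OF cell_subset_cube finite_cube] .

lemma cell_eq_children: "cell n C = cell n (C @ [(S, -1)]) \<union> cell n (C @ [(S, 1)])"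
  using chi_cube cell_subset_cube by (fastforce simp: cell_snoc)

lemma sum_cell_children:
  "sum f (cell n C) = sum f (cell n (C @ [(S, -1)])) + sum f (cell n (C @ [(S, 1)]))"
  by (subst cell_eq_children[of n C S], rule sum.union_disjoint) (auto simp: finite_cell cell_snoc)

lemma chi_eq_on_cell:
  "x \<in> cell n C \<Longrightarrow> y \<in> cell n C \<Longrightarrow> S \<in> set (map fst C) \<Longrightarrow> chi S x = chi S y"
  by (force simp: cell_def)

lemma fixed_by_on_cell:
  assumes "fixed_by n (map fst C) f" "x \<in> cell n C" "y \<in> cell n C"
  shows "f x = f y"
  using assms chi_eq_on_cell[OF assms(2,3)] cell_subset_cube unfolding fixed_by_def by blast

lemma not_fixed_by_coordE:
  assumes "\<not> fixed_by n Q (\<lambda>x. x i)"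
  obtains w where "w \<in> cube n" "\<forall>T \<in> set Q. chi T w = 1" "w i = -1"
proof -
  from assms obtain u v where u: "u \<in> cube n" and v: "v \<in> cube n"
    and agree: "\<forall>T \<in> set Q. chi T u = chi T v" and "u i \<noteq> v i"
    unfolding fixed_by_def by blast
  have "\<forall>T \<in> set Q. chi T (u * v) = 1"
    using agree chi_square_cube[OF v] by (simp add: chi_times)
  moreover have "(u * v) i = -1"
    using \<open>u i \<noteq> v i\<close> cube_coord[OF u, of i] cube_coord[OF v, of i] by auto
  ultimately show thesis
    using that times_in_cube[OF u v] by blast
qed

text \<open>Multiplying by a witness \<open>w\<close> of non-fixedness is an involution of the cell that negates
  coordinate \<open>i\<close>.\<close>
lemma sum_coord_cell_not_fixed:
  assumes "\<not> fixed_by n (map fst C) (\<lambda>x. x i)"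
  shows "(\<Sum>y \<in> cell n C. real_of_int (y i)) = 0"
proof -
  obtain w where w: "w \<in> cube n" "\<forall>T \<in> set (map fst C). chi T w = 1" "w i = -1"
    using not_fixed_by_coordE[OF assms] .
  have w_cell: "w * y \<in> cell n C" if "y \<in> cell n C" for y
    using that w times_in_cube[OF w(1)] by (force simp: cell_def chi_times)
  have w_invol: "w * (w * y) = y" if "y \<in> cell n C" for y
    using that cube_coord_square[OF w(1)] cell_subset_cube
    by (auto simp: fun_eq_iff mult.assoc[symmetric])
  have "(\<Sum>y \<in> cell n C. real_of_int (y i)) = (\<Sum>y \<in> cell n C. real_of_int ((w * y) i))"
    by (rule sum.reindex_bij_witness[where i = "(*) w" and j = "(*) w"])
      (simp_all only: w_cell w_invol)
  also have "\<dots> = - (\<Sum>y \<in> cell n C. real_of_int (y i))"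
    by (simp add: w(3) sum_negf)
  finally show ?thesis
    by simp
qed

lemma sum_coord_cell:
  assumes "x \<in> cell n C"
  shows "(\<Sum>y \<in> cell n C. real_of_int (y i))
    = real (card (cell n C)) * (if fixed_by n (map fst C) (\<lambda>x. x i) then real_of_int (x i) else 0)"
proof (cases "fixed_by n (map fst C) (\<lambda>x. x i)")
  case True
  then have "(\<Sum>y \<in> cell n C. real_of_int (y i)) = (\<Sum>y \<in> cell n C. real_of_int (x i))"
    using fixed_by_on_cell[OF True _ assms] by (intro sum.cong) auto
  with True show ?thesis
    by simp
qed (simp add: sum_coord_cell_not_fixed)

definition mean :: "'a set \<Rightarrow> ('a \<Rightarrow> real) \<Rightarrow> real" where
  "mean A f = sum f A / real (card A)"

lemma card_times_mean: "real (card A) * mean A f = sum f A"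
  by (cases "finite A \<and> A \<noteq> {}") (auto simp: mean_def)

definition coord_sum :: "nat \<Rightarrow> (nat \<Rightarrow> int) \<Rightarrow> real" where
  "coord_sum n y = (\<Sum>i<n. real_of_int (y i))"

lemma mean_coord_sum: "mean A (coord_sum n) = (\<Sum>i<n. (\<Sum>y\<in>A. real_of_int (y i)) / real (card A))"
  by (simp add: mean_def coord_sum_def sum_divide_distrib[symmetric] sum.swap[of _ A])

lemma mean_coord_sum_cell:
  assumes "x \<in> cell n C"
  shows "mean (cell n C) (coord_sum n)
    = (\<Sum>i<n. if fixed_by n (map fst C) (\<lambda>x. x i) then real_of_int (x i) else 0)"
proof -
  have "card (cell n C) \<noteq> 0"
    using assms finite_cell by auto
  then show ?thesis
    by (simp add: mean_coord_sum sum_coord_cell[OF assms])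
qed

lemma mean_coord_sum_cube: "mean (cube n) (coord_sum n) = 0"
proof -
  have not_fixed: "\<not> fixed_by n [] (\<lambda>x. x i)" if "i < n" for i
  proof
    assume "fixed_by n [] (\<lambda>x. x i)"
    then have all_eq: "\<forall>x \<in> cube n. \<forall>y \<in> cube n. x i = y i"
      by (simp add: fixed_by_def)
    have "1 (i := -1) \<in> cube n"
      using \<open>i < n\<close> by (auto simp: cube_def)
    from bspec[OF bspec[OF all_eq one_in_cube] this] show False
      by simp
  qed
  have "mean (cube n) (coord_sum n)
      = (\<Sum>i<n. if fixed_by n [] (\<lambda>x. x i) then real_of_int ((1 :: nat \<Rightarrow> int) i) else 0)"
    using mean_coord_sum_cell[of 1 n "[]"] one_in_cube by (simp only: cell_Nil list.map)
  also have "\<dots> = 0"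
    using not_fixed by simp
  finally show ?thesis .
qed

subsection \<open>Correlation-freeness along a path\<close>

definition correlation_free_at :: "nat \<Rightarrow> nat set list \<Rightarrow> bool" where
  "correlation_free_at n Q = (\<forall>i<n. \<forall>j<n. i \<noteq> j \<longrightarrow> fixed_by n Q (\<lambda>x. x i * x j) \<longrightarrow>
      fixed_by n Q (\<lambda>x. x i) \<and> fixed_by n Q (\<lambda>x. x j))"

lemma correlation_free_iff: "correlation_free n T \<longleftrightarrow> (\<forall>Q \<in> qpaths T. correlation_free_at n Q)"
  by (simp add: correlation_free_def correlation_free_at_def)

lemma newly_fixed_coord_flips:
  assumes fixed: "fixed_by n (Q @ [S]) (\<lambda>x. x i)" and not_fixed: "\<not> fixed_by n Q (\<lambda>x. x i)"
    and y: "y \<in> cube n" and z: "z \<in> cube n"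
    and agree: "\<forall>T \<in> set Q. chi T y = chi T z" and differ: "chi S y \<noteq> chi S z"
  shows "y i = - z i"
proof -
  obtain w where w: "w \<in> cube n" "\<forall>T \<in> set Q. chi T w = 1" "w i = -1"
    using not_fixed_by_coordE[OF not_fixed] .
  have fixed_eq: "u i = v i"
    if "u \<in> cube n" "v \<in> cube n" "\<forall>T \<in> set (Q @ [S]). chi T u = chi T v" for u v
    using fixed that unfolding fixed_by_def by blast
  have "chi S w \<noteq> 1"
  proof
    assume "chi S w = 1"
    with w(2) have "\<forall>T \<in> set (Q @ [S]). chi T w = chi T 1"
      by (simp add: chi_one)
    from fixed_eq[OF w(1) one_in_cube this] w(3) show False
      by simp
  qed
  then have "chi S (w * z) = chi S y"
    using chi_cube[OF w(1), of S] chi_cube[OF y, of S] chi_cube[OF z, of S] differ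
    by (auto simp: chi_times)
  moreover have "chi T (w * z) = chi T y" if "T \<in> set Q" for T
    using that agree w(2) by (simp add: chi_times)
  ultimately have "\<forall>T \<in> set (Q @ [S]). chi T y = chi T (w * z)"
    by auto
  from fixed_eq[OF y times_in_cube[OF w(1) z] this] w(3) show ?thesis
    by simp
qed

lemma newly_fixed_unique:
  assumes cf: "correlation_free_at n Q" and "i < n" "j < n"
    and fixed: "fixed_by n (Q @ [S]) (\<lambda>x. x i)" "fixed_by n (Q @ [S]) (\<lambda>x. x j)"
    and not_fixed: "\<not> fixed_by n Q (\<lambda>x. x i)" "\<not> fixed_by n Q (\<lambda>x. x j)"
  shows "i = j"
proof (rule ccontr)
  assume "i \<noteq> j"
  have "fixed_by n Q (\<lambda>x. x i * x j)"
    unfolding fixed_by_def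
  proof (intro ballI impI)
    fix y z assume y: "y \<in> cube n" and z: "z \<in> cube n" and agree: "\<forall>T \<in> set Q. chi T y = chi T z"
    show "y i * y j = z i * z j"
    proof (cases "chi S y = chi S z")
      case True
      with agree have "\<forall>T \<in> set (Q @ [S]). chi T y = chi T z"
        by auto
      with fixed y z show ?thesis
        unfolding fixed_by_def by metis
    next
      case False
      with newly_fixed_coord_flips[OF fixed(1) not_fixed(1) y z agree]
        newly_fixed_coord_flips[OF fixed(2) not_fixed(2) y z agree]
      show ?thesis
        by simp
    qed
  qed
  with cf \<open>i < n\<close> \<open>j < n\<close> \<open>i \<noteq> j\<close> not_fixed show False
    unfolding correlation_free_at_def by blast
qed

lemma abs_sum_le_if_single_support:
  fixes g :: "'a \<Rightarrow> real"
  assumes "finite I" "0 \<le> c" "\<And>i. i \<in> I \<Longrightarrow> \<bar>g i\<bar> \<le> c"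
    and "\<And>i j. i \<in> I \<Longrightarrow> j \<in> I \<Longrightarrow> g i \<noteq> 0 \<Longrightarrow> g j \<noteq> 0 \<Longrightarrow> i = j"
  shows "\<bar>sum g I\<bar> \<le> c"
proof (cases "\<exists>k \<in> I. g k \<noteq> 0")
  case True
  then obtain k where k: "k \<in> I" "g k \<noteq> 0"
    by blast
  have "sum g I = sum g {k}"
    using assms(1,4) k by (intro sum.mono_neutral_right) auto
  with assms(3) k show ?thesis
    by simp
qed (use assms(2) in simp)

lemma mean_coord_sum_sibling_cells:
  assumes cf: "correlation_free_at n (map fst C)"
    and x1: "x1 \<in> cell n (C @ [(S, b1)])" and x2: "x2 \<in> cell n (C @ [(S, b2)])"
  shows "\<bar>mean (cell n (C @ [(S, b1)])) (coord_sum n) - mean (cell n (C @ [(S, b2)])) (coord_sum n)\<bar> \<le> 2"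
proof -
  let ?Q = "map fst C"
  define g where "g i = (if fixed_by n (?Q @ [S]) (\<lambda>x. x i)
      then real_of_int (x1 i) - real_of_int (x2 i) else 0)" for i
  have x12: "x1 \<in> cell n C" "x2 \<in> cell n C"
    using x1 x2 by (simp_all add: cell_snoc)
  have "mean (cell n (C @ [(S, b1)])) (coord_sum n) - mean (cell n (C @ [(S, b2)])) (coord_sum n)
      = sum g {..<n}"
    unfolding mean_coord_sum_cell[OF x1] mean_coord_sum_cell[OF x2] sum_subtractf[symmetric]
    by (intro sum.cong) (simp_all add: g_def)
  also have "\<bar>sum g {..<n}\<bar> \<le> 2"
  proof (rule abs_sum_le_if_single_support)
    fix i
    have "x1 \<in> cube n" "x2 \<in> cube n"
      using x12 cell_subset_cube by auto
    then show "\<bar>g i\<bar> \<le> 2"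
      using cube_coord[of x1 n i] cube_coord[of x2 n i] by (auto simp: g_def)
  next
    have "x1 i \<noteq> x2 i" if "g i \<noteq> 0" for i
      using that by (auto simp: g_def split: if_splits)
    then have newly: "\<not> fixed_by n ?Q (\<lambda>x. x i)" if "g i \<noteq> 0" for i
      using that fixed_by_on_cell[OF _ x12, of "\<lambda>x. x i"] by auto
    fix i j assume "i \<in> {..<n}" "j \<in> {..<n}" "g i \<noteq> 0" "g j \<noteq> 0"
    with newly show "i = j"
      by (intro newly_fixed_unique[OF cf, of i j S]) (auto simp: g_def split: if_splits)
  qed simp_all
  finally show ?thesis .
qed

lemma weighted_two_point_bound:
  fixes a b m1 m2 m \<delta> :: real
  assumes "0 \<le> a" "0 \<le> b" "a * m1 + b * m2 = (a + b) * m"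
    and "0 < a \<Longrightarrow> 0 < b \<Longrightarrow> \<bar>m1 - m2\<bar> \<le> 2 * \<delta>"
  shows "a * m1\<^sup>2 + b * m2\<^sup>2 \<le> (a + b) * (m\<^sup>2 + \<delta>\<^sup>2)"
proof (cases "a = 0 \<or> b = 0")
  case True
  with assms(1-3) have "a * m1\<^sup>2 + b * m2\<^sup>2 = (a + b) * m\<^sup>2"
    by (auto simp: power2_eq_square algebra_simps)
  moreover have "0 \<le> (a + b) * \<delta>\<^sup>2"
    using assms(1,2) by simp
  ultimately show ?thesis
    by (simp add: distrib_left)
next
  case False
  with assms have ab: "0 < a" "0 < b" "\<bar>m1 - m2\<bar> \<le> 2 * \<delta>"
    by auto
  have "(m1 - m2)\<^sup>2 \<le> (2 * \<delta>)\<^sup>2"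
    using ab(3) by (metis abs_le_square_iff abs_of_nonneg abs_ge_zero order_trans)
  then have "a * b * (m1 - m2)\<^sup>2 \<le> (4 * a * b) * \<delta>\<^sup>2"
    using mult_left_mono[of _ _ "a * b"] ab by (simp add: power_mult_distrib)
  also have "\<dots> \<le> (a + b)\<^sup>2 * \<delta>\<^sup>2"
    using sum_squares_ge_zero[of "a - b" 0]
    by (intro mult_right_mono) (simp_all add: power2_eq_square algebra_simps)
  finally have spread: "a * b * (m1 - m2)\<^sup>2 \<le> (a + b)\<^sup>2 * \<delta>\<^sup>2" .
  have "(a + b) * (a * m1\<^sup>2 + b * m2\<^sup>2) = (a * m1 + b * m2)\<^sup>2 + a * b * (m1 - m2)\<^sup>2"
    by (simp add: power2_eq_square algebra_simps)
  also have "\<dots> \<le> ((a + b) * m)\<^sup>2 + (a + b)\<^sup>2 * \<delta>\<^sup>2"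
    using spread assms(3) by simp
  also have "\<dots> = (a + b) * ((a + b) * (m\<^sup>2 + \<delta>\<^sup>2))"
    by (simp add: power2_eq_square algebra_simps)
  finally have "(a + b) * (a * m1\<^sup>2 + b * m2\<^sup>2) \<le> (a + b) * ((a + b) * (m\<^sup>2 + \<delta>\<^sup>2))" .
  with ab show ?thesis
    by simp
qed

subsection \<open>The second moment of the leaf sums\<close>

definition leaf_energy :: "nat \<Rightarrow> (nat \<Rightarrow> int) set \<Rightarrow> ptree \<Rightarrow> real" where
  "leaf_energy n A T = (\<Sum>x\<in>A. (mean {y \<in> A. same_leaf T x y} (coord_sum n))\<^sup>2)"

lemma leaf_energy_Leaf: "leaf_energy n A Leaf = real (card A) * (mean A (coord_sum n))\<^sup>2"
  by (simp add: leaf_energy_def)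

lemma leaf_energy_Node_cell:
  "leaf_energy n (cell n C) (Node S l r)
    = leaf_energy n (cell n (C @ [(S, -1)])) l + leaf_energy n (cell n (C @ [(S, 1)])) r"
proof -
  let ?leaf = "\<lambda>x. {y \<in> cell n C. same_leaf (Node S l r) x y}"
  have "leaf_energy n (cell n C) (Node S l r)
      = (\<Sum>x \<in> cell n (C @ [(S, -1)]). (mean (?leaf x) (coord_sum n))\<^sup>2)
        + (\<Sum>x \<in> cell n (C @ [(S, 1)]). (mean (?leaf x) (coord_sum n))\<^sup>2)"
    unfolding leaf_energy_def by (rule sum_cell_children)
  also have "\<dots> = leaf_energy n (cell n (C @ [(S, -1)])) l + leaf_energy n (cell n (C @ [(S, 1)])) r"
    unfolding leaf_energy_def
    by (intro arg_cong2[where f = "(+)"] sum.cong refl arg_cong[where f = "\<lambda>A. (mean A _)\<^sup>2"])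
      (auto simp: cell_snoc)
  finally show ?thesis .
qed

lemma leaf_energy_cell_le:
  assumes "\<forall>P \<in> qpaths T. correlation_free_at n (map fst C @ P)"
  shows "leaf_energy n (cell n C) T
    \<le> real (card (cell n C)) * ((mean (cell n C) (coord_sum n))\<^sup>2 + real (depth T))"
  using assms
proof (induction T arbitrary: C)
  case Leaf
  then show ?case
    by (simp add: leaf_energy_Leaf)
next
  case (Node S l r)
  let ?a = "real (card (cell n (C @ [(S, -1)])))" and ?b = "real (card (cell n (C @ [(S, 1)])))"
  let ?m1 = "mean (cell n (C @ [(S, -1)])) (coord_sum n)"
    and ?m2 = "mean (cell n (C @ [(S, 1)])) (coord_sum n)"
    and ?m = "mean (cell n C) (coord_sum n)"
  define D where "D = real (max (depth l) (depth r))"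
  have card_split: "real (card (cell n C)) = ?a + ?b"
    using sum_cell_children[of "\<lambda>_. 1 :: real" n C S] by simp
  have mean_split: "?a * ?m1 + ?b * ?m2 = (?a + ?b) * ?m"
    unfolding card_times_mean card_split[symmetric] by (rule sum_cell_children[symmetric])
  have cf: "correlation_free_at n (map fst C)"
    using Node.prems by (metis append_Nil2 qpaths.simps(2) insertI1)
  have spread: "\<bar>?m1 - ?m2\<bar> \<le> 2 * 1" if "0 < ?a" "0 < ?b"
    using that mean_coord_sum_sibling_cells[OF cf] by (fastforce simp: card_gt_0_iff)
  have "leaf_energy n (cell n C) (Node S l r) \<le> ?a * (?m1\<^sup>2 + D) + ?b * (?m2\<^sup>2 + D)"
  proof -
    have "leaf_energy n (cell n (C @ [(S, -1)])) l \<le> ?a * (?m1\<^sup>2 + real (depth l))"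
      using Node.IH(1)[of "C @ [(S, -1)]"] Node.prems by simp
    moreover have "leaf_energy n (cell n (C @ [(S, 1)])) r \<le> ?b * (?m2\<^sup>2 + real (depth r))"
      using Node.IH(2)[of "C @ [(S, 1)]"] Node.prems by simp
    moreover have "?a * (?m1\<^sup>2 + real (depth l)) \<le> ?a * (?m1\<^sup>2 + D)"
      "?b * (?m2\<^sup>2 + real (depth r)) \<le> ?b * (?m2\<^sup>2 + D)"
      by (simp_all add: D_def mult_left_mono)
    ultimately show ?thesis
      by (simp add: leaf_energy_Node_cell)
  qed
  also have "\<dots> = (?a * ?m1\<^sup>2 + ?b * ?m2\<^sup>2) + (?a + ?b) * D"
    by (simp add: algebra_simps)
  also have "\<dots> \<le> (?a + ?b) * (?m\<^sup>2 + 1\<^sup>2) + (?a + ?b) * D"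
    using weighted_two_point_bound[OF _ _ mean_split spread] by simp
  also have "\<dots> = real (card (cell n C)) * (?m\<^sup>2 + real (depth (Node S l r)))"
    by (simp add: card_split D_def algebra_simps)
  finally show ?case .
qed

lemma sum_leaf_vec: "(\<Sum>i<n. leaf_vec n T x i) = mean {y \<in> cube n. same_leaf T x y} (coord_sum n)"
  by (simp add: leaf_vec_def mean_coord_sum Let_def)

theorem proposition1:
  fixes n :: nat and T :: ptree
  assumes "labels_in n T"
    and "correlation_free n T"
  shows "(\<Sum>x\<in>cube n. (\<Sum>i<n. leaf_vec n T x i)\<^sup>2) / 2 ^ n \<le> real (depth T)"
proof -
  have cf: "\<forall>P \<in> qpaths T. correlation_free_at n (map fst [] @ P)"
    using assms(2) by (simp add: correlation_free_iff)
  have "real (card (cube n)) \<le> 2 ^ n"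
    using card_cube_le[of n] by (metis of_nat_le_iff of_nat_numeral of_nat_power)
  have "(\<Sum>x\<in>cube n. (\<Sum>i<n. leaf_vec n T x i)\<^sup>2) = leaf_energy n (cell n []) T"
    by (simp only: leaf_energy_def sum_leaf_vec cell_Nil)
  also have "\<dots> \<le> real (card (cube n)) * real (depth T)"
    using leaf_energy_cell_le[OF cf] by (simp only: cell_Nil mean_coord_sum_cube) simp
  also have "\<dots> \<le> 2 ^ n * real (depth T)"
    using \<open>real (card (cube n)) \<le> 2 ^ n\<close> by (rule mult_right_mono) simp
  finally show ?thesis
    by (simp add: pos_divide_le_eq mult.commute)
qed

end
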